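(* A Cantor set (with any compatible metric) admits a continuous selfmap which is generically chaotic but not generically $\varepsilon$-chaotic for any $\varepsilon>0$.
   Context: For continuous $f$ on a compact metric space $(X,d)$: $(x,y)$ is a Li-Yorke pair if $\liminf_n d(f^n(x),f^n(y))=0<\limsup_n d(f^n(x),f^n(y))$, and an $\varepsilon$-scrambled pair if $\liminf_n d(f^n(x),f^n(y))=0$ and $\limsup_n d(f^n(x),f^n(y))>\varepsilon$; $f$ is generically chaotic (resp. generically $\varepsilon$-chaotic) if the set of Li-Yorke (resp. $\varepsilon$-scrambled) pairs is residual in $X^2$. *)

theory Defs
  imports "HOL-Analysis.Analysis" "HOL-Library.Liminf_Limsup"
begin

fun cantor_level :: "nat \<Rightarrow> real set" where
  "cantor_level 0 = {0..1}"
| "cantor_level (Suc n) = (\<lambda>x. x / 3) ` cantor_level n \<union> (\<lambda>x. x / 3 + 2 / 3) ` cantor_level n"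

definition cantor_set :: "real set" where
  "cantor_set = (\<Inter>n. cantor_level n)"

definition residual_in :: "'a::topological_space set \<Rightarrow> 'a set \<Rightarrow> bool" where
  "residual_in S A \<longleftrightarrow> A \<subseteq> S \<and>
     (\<exists>G :: nat \<Rightarrow> 'a set. (\<forall>n. openin (top_of_set S) (G n) \<and> S \<subseteq> closure (G n))
        \<and> S \<inter> (\<Inter>n. G n) \<subseteq> A)"

definition orbit_dist :: "('a::metric_space \<Rightarrow> 'a) \<Rightarrow> 'a \<Rightarrow> 'a \<Rightarrow> nat \<Rightarrow> ereal" where
  "orbit_dist f x y = (\<lambda>n. ereal (dist ((f ^^ n) x) ((f ^^ n) y)))"

definition li_yorke_pair :: "('a::metric_space \<Rightarrow> 'a) \<Rightarrow> 'a \<Rightarrow> 'a \<Rightarrow> bool" where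
  "li_yorke_pair f x y \<longleftrightarrow>
     liminf (orbit_dist f x y) = 0 \<and> 0 < limsup (orbit_dist f x y)"

definition eps_scrambled_pair :: "('a::metric_space \<Rightarrow> 'a) \<Rightarrow> real \<Rightarrow> 'a \<Rightarrow> 'a \<Rightarrow> bool" where
  "eps_scrambled_pair f \<epsilon> x y \<longleftrightarrow>
     liminf (orbit_dist f x y) = 0 \<and> ereal \<epsilon> < limsup (orbit_dist f x y)"

definition generically_chaotic :: "'a::metric_space set \<Rightarrow> ('a \<Rightarrow> 'a) \<Rightarrow> bool" where
  "generically_chaotic X f \<longleftrightarrow>
     residual_in (X \<times> X) {(x, y) \<in> X \<times> X. li_yorke_pair f x y}"

definition generically_eps_chaotic :: "'a::metric_space set \<Rightarrow> ('a \<Rightarrow> 'a) \<Rightarrow> real \<Rightarrow> bool" where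
  "generically_eps_chaotic X f \<epsilon> \<longleftrightarrow>
     residual_in (X \<times> X) {(x, y) \<in> X \<times> X. eps_scrambled_pair f \<epsilon> x y}"

end

theory Submission
  imports Defs "HOL-Library.Nat_Bijection"
begin

(* Code the Cantor set by binary sequences (ternary digits 0 and 2). Read the position of the
   first one of a nonzero sequence through the Cantor pairing function as a pair (k, j): the
   sequence lies in block k and is a translate of a sequence whose first one is at j. The block
   shift acts on every block as the one-sided shift of that translate. Orbits through block k
   stay in [0, 3^-k], and a sequence with finitely many ones is eventually sent to the common
   fixed point 0.

   Hence a small open set of pairs inside block k keeps all orbit distances below 3^-k, and by
   Baire no epsilon-chaos is generic. On the other hand the pairs that eventually coincide are
   dense, and so are, for every time m, the pairs whose first point reaches the leading point of
   its block after time m while the second one has died; two G_delta arguments make the generic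
   pair Li-Yorke, with a separation depending on the block of the first point. A uniformly
   continuous conjugacy preserves Li-Yorke pairs, and epsilon-scrambled pairs up to a smaller
   epsilon, which carries everything over to X. *)

section \<open>Residual sets\<close>

lemma residual_inI:
  fixes G :: "nat \<Rightarrow> 'a::topological_space set"
  assumes "\<And>n. openin (top_of_set S) (G n)" "\<And>n. S \<subseteq> closure (G n)"
    and "S \<inter> (\<Inter>n. G n) \<subseteq> A" "A \<subseteq> S"
  shows "residual_in S A"
  unfolding residual_in_def using assms by auto

lemma residual_inE:
  fixes S :: "'a::topological_space set"
  assumes "residual_in S A"
  obtains G :: "nat \<Rightarrow> 'a set" where "\<And>n. openin (top_of_set S) (G n)" "\<And>n. S \<subseteq> closure (G n)"
    and "S \<inter> (\<Inter>n. G n) \<subseteq> A" "A \<subseteq> S"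
  using assms unfolding residual_in_def by (elim conjE exE) auto

lemma residual_in_mono:
  fixes S :: "'a::topological_space set"
  assumes "residual_in S A" "A \<subseteq> B" "B \<subseteq> S"
  shows "residual_in S B"
  using assms(1)
proof (rule residual_inE)
  fix G :: "nat \<Rightarrow> 'a set"
  assume "\<And>n. openin (top_of_set S) (G n)" "\<And>n. S \<subseteq> closure (G n)" "S \<inter> (\<Inter>n. G n) \<subseteq> A"
  then show ?thesis
    using assms(2,3) by (intro residual_inI[where G = G]) auto
qed

lemma residual_in_Int:
  fixes S :: "'a::topological_space set"
  assumes "residual_in S A" "residual_in S B"
  shows "residual_in S (A \<inter> B)"
proof -
  obtain G :: "nat \<Rightarrow> 'a set" where G: "\<And>n. openin (top_of_set S) (G n)" "\<And>n. S \<subseteq> closure (G n)"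
    and GA: "S \<inter> (\<Inter>n. G n) \<subseteq> A" and "A \<subseteq> S"
    using assms(1) by (rule residual_inE) blast
  obtain H :: "nat \<Rightarrow> 'a set" where H: "\<And>n. openin (top_of_set S) (H n)" "\<And>n. S \<subseteq> closure (H n)"
    and HB: "S \<inter> (\<Inter>n. H n) \<subseteq> B"
    using assms(2) by (rule residual_inE) blast
  define K where "K n = (if even n then G (n div 2) else H (n div 2))" for n
  show ?thesis
  proof (rule residual_inI)
    show "openin (top_of_set S) (K n)" "S \<subseteq> closure (K n)" for n
      using G H by (simp_all add: K_def)
    show "S \<inter> (\<Inter>n. K n) \<subseteq> A \<inter> B"
    proof
      fix x assume x: "x \<in> S \<inter> (\<Inter>n. K n)"
      then have "x \<in> K (2 * n)" "x \<in> K (Suc (2 * n))" for n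
        by auto
      then have "x \<in> S \<inter> (\<Inter>n. G n)" "x \<in> S \<inter> (\<Inter>n. H n)"
        using x by (simp_all add: K_def)
      then show "x \<in> A \<inter> B"
        using GA HB by auto
    qed
    show "A \<inter> B \<subseteq> S"
      using \<open>A \<subseteq> S\<close> by auto
  qed
qed

lemma homeomorphic_image_dense:
  assumes "homeomorphism S T \<phi> \<psi>" "closed S" "G \<subseteq> S" "S \<subseteq> closure G"
  shows "T \<subseteq> closure (\<phi> ` G)"
proof -
  have "closure G \<subseteq> S"
    using assms(2,3) by (simp add: closure_minimal)
  then have "\<phi> ` closure G \<subseteq> closure (\<phi> ` G)"
    using assms(1) by (intro continuous_image_closure_subset) (auto simp: homeomorphism_def)
  moreover have "T = \<phi> ` S"
    using assms(1) by (simp add: homeomorphism_def)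
  ultimately show ?thesis
    using assms(4) by blast
qed

lemma residual_in_homeomorphic_image:
  fixes S :: "'a::topological_space set"
  assumes hom: "homeomorphism S T \<phi> \<psi>" and "closed S" and res: "residual_in S A"
  shows "residual_in T (\<phi> ` A)"
proof -
  obtain G :: "nat \<Rightarrow> 'a set" where G: "\<And>n. openin (top_of_set S) (G n)" "\<And>n. S \<subseteq> closure (G n)"
    and GA: "S \<inter> (\<Inter>n. G n) \<subseteq> A" and "A \<subseteq> S"
    using res by (rule residual_inE) blast
  have GS: "G n \<subseteq> S" for n
    using G(1) by (rule openin_imp_subset)
  show ?thesis
  proof (rule residual_inI)
    show "openin (top_of_set T) (\<phi> ` G n)" for n
      using homeomorphism_imp_open_map[OF hom G(1)] .
    show "T \<subseteq> closure (\<phi> ` G n)" for n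
      using hom \<open>closed S\<close> GS G(2) by (rule homeomorphic_image_dense)
    show "T \<inter> (\<Inter>n. \<phi> ` G n) \<subseteq> \<phi> ` A"
    proof
      fix t assume t: "t \<in> T \<inter> (\<Inter>n. \<phi> ` G n)"
      have inv: "\<And>x. x \<in> S \<Longrightarrow> \<psi> (\<phi> x) = x" "\<psi> t \<in> S" "\<phi> (\<psi> t) = t"
        using t hom unfolding homeomorphism_def by auto
      have "\<psi> t \<in> G n" for n
      proof -
        obtain x where "x \<in> G n" "t = \<phi> x"
          using t by auto
        then show ?thesis
          using inv(1)[of x] GS[of n] by auto
      qed
      then have "\<psi> t \<in> A"
        using GA inv(2) by auto
      then show "t \<in> \<phi> ` A"
        using inv(3) by (metis image_eqI)
    qed
    show "\<phi> ` A \<subseteq> T"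
      using \<open>A \<subseteq> S\<close> hom by (auto simp: homeomorphism_def)
  qed
qed

lemma continuous_on_map_prod:
  assumes "continuous_on A f" "continuous_on B g"
  shows "continuous_on (A \<times> B) (map_prod f g)"
proof -
  have "continuous_on (A \<times> B) (\<lambda>x. f (fst x))"
    by (rule continuous_on_compose2[OF assms(1) continuous_on_fst[OF continuous_on_id]]) auto
  moreover have "continuous_on (A \<times> B) (\<lambda>x. g (snd x))"
    by (rule continuous_on_compose2[OF assms(2) continuous_on_snd[OF continuous_on_id]]) auto
  ultimately show ?thesis
    unfolding map_prod_def split_def by (rule continuous_on_Pair)
qed

lemma homeomorphism_square:
  assumes "homeomorphism S T \<phi> \<psi>"
  shows "homeomorphism (S \<times> S) (T \<times> T) (map_prod \<phi> \<phi>) (map_prod \<psi> \<psi>)"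
proof -
  have "\<forall>x\<in>S. \<psi> (\<phi> x) = x" "\<phi> ` S = T" "continuous_on S \<phi>"
    "\<forall>y\<in>T. \<phi> (\<psi> y) = y" "\<psi> ` T = S" "continuous_on T \<psi>"
    using assms by (simp_all add: homeomorphism_def)
  then show ?thesis
    unfolding homeomorphism_def by (simp add: map_prod_surj_on continuous_on_map_prod)
qed

lemma residual_in_meets_openin:
  fixes S :: "'a::{real_normed_vector,heine_borel} set"
  assumes "closed S" and res: "residual_in S A" and U: "openin (top_of_set S) U" "U \<noteq> {}"
  shows "A \<inter> U \<noteq> {}"
proof -
  obtain G :: "nat \<Rightarrow> 'a set" where G: "\<And>n. openin (top_of_set S) (G n)" "\<And>n. S \<subseteq> closure (G n)"
    and GA: "S \<inter> (\<Inter>n. G n) \<subseteq> A"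
    using res by (rule residual_inE) blast
  have dense: "S \<subseteq> closure (\<Inter>(range G))"
    using G by (intro Baire[OF \<open>closed S\<close>]) auto
  obtain V where V: "open V" "U = S \<inter> V"
    using U(1) openin_open by blast
  then obtain u where "u \<in> V \<inter> closure (\<Inter>(range G))"
    using U(2) dense by blast
  then obtain p where p: "p \<in> V" "p \<in> \<Inter>(range G)"
    using open_Int_closure_eq_empty[OF V(1)] by blast
  then have "p \<in> S"
    using G(1) openin_imp_subset by blast
  then show ?thesis
    using GA p V(2) by blast
qed

section \<open>Li-Yorke pairs under conjugacy\<close>

lemma liminf_eq_0_iff_frequently_less:
  fixes u :: "nat \<Rightarrow> real"
  assumes "\<And>n. 0 \<le> u n"
  shows "liminf (\<lambda>n. ereal (u n)) = 0 \<longleftrightarrow> (\<forall>e>0. \<exists>\<^sub>F n in sequentially. u n < e)"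
proof
  assume lim: "liminf (\<lambda>n. ereal (u n)) = 0"
  show "\<forall>e>0. \<exists>\<^sub>F n in sequentially. u n < e"
  proof (intro allI impI)
    fix e :: real assume "0 < e"
    show "\<exists>\<^sub>F n in sequentially. u n < e"
    proof (rule ccontr)
      assume "\<not> (\<exists>\<^sub>F n in sequentially. u n < e)"
      then have "\<forall>\<^sub>F n in sequentially. ereal e \<le> ereal (u n)"
        by (simp add: not_frequently not_less)
      then have "ereal e \<le> liminf (\<lambda>n. ereal (u n))"
        by (rule Liminf_bounded)
      then show False
        using lim \<open>0 < e\<close> by simp
    qed
  qed
next
  assume freq: "\<forall>e>0. \<exists>\<^sub>F n in sequentially. u n < e"
  show "liminf (\<lambda>n. ereal (u n)) = 0"
  proof (rule antisym)
    show "0 \<le> liminf (\<lambda>n. ereal (u n))"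
      by (rule Liminf_bounded) (simp add: assms)
    show "liminf (\<lambda>n. ereal (u n)) \<le> 0"
    proof (rule ccontr)
      assume "\<not> liminf (\<lambda>n. ereal (u n)) \<le> 0"
      then obtain z where z: "0 < ereal z" "ereal z < liminf (\<lambda>n. ereal (u n))"
        by (meson ereal_dense2 not_le)
      have "\<forall>\<^sub>F n in sequentially. \<not> u n < z"
        using less_LiminfD[OF z(2)] by (rule eventually_mono) simp
      moreover have "\<exists>\<^sub>F n in sequentially. u n < z"
        using freq z(1) by simp
      ultimately show False
        by (simp add: frequently_def)
    qed
  qed
qed

lemma less_limsup_iff_frequently_less:
  fixes u :: "nat \<Rightarrow> real"
  shows "ereal c < limsup (\<lambda>n. ereal (u n)) \<longleftrightarrow> (\<exists>d>c. \<exists>\<^sub>F n in sequentially. d < u n)"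
proof
  assume "ereal c < limsup (\<lambda>n. ereal (u n))"
  then obtain d where d: "ereal c < ereal d" "ereal d < limsup (\<lambda>n. ereal (u n))"
    using ereal_dense2 by blast
  have "\<exists>\<^sub>F n in sequentially. d < u n"
  proof (rule ccontr)
    assume "\<not> (\<exists>\<^sub>F n in sequentially. d < u n)"
    then have "\<forall>\<^sub>F n in sequentially. ereal (u n) \<le> ereal d"
      by (simp add: not_frequently not_less)
    then have "limsup (\<lambda>n. ereal (u n)) \<le> ereal d"
      by (rule Limsup_bounded)
    then show False
      using d(2) by simp
  qed
  then show "\<exists>d>c. \<exists>\<^sub>F n in sequentially. d < u n"
    using d(1) by auto
next
  assume "\<exists>d>c. \<exists>\<^sub>F n in sequentially. d < u n"
  then obtain d where d: "c < d" "\<exists>\<^sub>F n in sequentially. d < u n"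
    by blast
  have "ereal c < ereal d"
    using d(1) by simp
  also have "ereal d \<le> limsup (\<lambda>n. ereal (u n))"
  proof (rule ccontr)
    assume "\<not> ereal d \<le> limsup (\<lambda>n. ereal (u n))"
    then have "\<forall>\<^sub>F n in sequentially. \<not> d < u n"
      using Limsup_lessD[where y = "ereal d" and f = "\<lambda>n. ereal (u n)" and F = sequentially]
      by (simp add: not_le eventually_mono)
    then show False
      using d(2) by (simp add: frequently_def)
  qed
  finally show "ereal c < limsup (\<lambda>n. ereal (u n))" .
qed

lemma li_yorke_pair_iff:
  "li_yorke_pair f x y \<longleftrightarrow>
     (\<forall>e>0. \<exists>\<^sub>F n in sequentially. dist ((f ^^ n) x) ((f ^^ n) y) < e) \<and>
     (\<exists>d>0. \<exists>\<^sub>F n in sequentially. d < dist ((f ^^ n) x) ((f ^^ n) y))"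
  using liminf_eq_0_iff_frequently_less[of "\<lambda>n. dist ((f ^^ n) x) ((f ^^ n) y)"]
    less_limsup_iff_frequently_less[of 0 "\<lambda>n. dist ((f ^^ n) x) ((f ^^ n) y)"]
  by (simp add: li_yorke_pair_def orbit_dist_def zero_ereal_def)

lemma eps_scrambled_pair_iff:
  "eps_scrambled_pair f \<epsilon> x y \<longleftrightarrow>
     (\<forall>e>0. \<exists>\<^sub>F n in sequentially. dist ((f ^^ n) x) ((f ^^ n) y) < e) \<and>
     (\<exists>d>\<epsilon>. \<exists>\<^sub>F n in sequentially. d < dist ((f ^^ n) x) ((f ^^ n) y))"
  using liminf_eq_0_iff_frequently_less[of "\<lambda>n. dist ((f ^^ n) x) ((f ^^ n) y)"]
    less_limsup_iff_frequently_less[of \<epsilon> "\<lambda>n. dist ((f ^^ n) x) ((f ^^ n) y)"]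
  by (simp add: eps_scrambled_pair_def orbit_dist_def)

lemma funpow_in_set: "f ` S \<subseteq> S \<Longrightarrow> x \<in> S \<Longrightarrow> (f ^^ n) x \<in> S"
  by (induction n) auto

lemma continuous_on_funpow:
  assumes "continuous_on S f" "f ` S \<subseteq> S"
  shows "continuous_on S (f ^^ n)"
proof (induction n)
  case 0
  then show ?case
    by (simp add: continuous_on_id)
next
  case (Suc n)
  have "(f ^^ n) ` S \<subseteq> S"
    using funpow_in_set[OF assms(2)] by auto
  then show ?case
    using continuous_on_compose2[OF assms(1) Suc] by simp
qed

lemma funpow_conjugate:
  assumes "\<forall>y\<in>Y. h (k y) = y" "g ` Y \<subseteq> Y" "y \<in> Y"
  shows "((k \<circ> g \<circ> h) ^^ n) (k y) = k ((g ^^ n) y)"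
  by (induction n) (use assms funpow_in_set[OF assms(2)] in auto)

lemma conjugate_continuous_self_map:
  assumes "homeomorphism X Y h k" "continuous_on Y g" "g ` Y \<subseteq> Y"
  shows "continuous_on X (k \<circ> g \<circ> h)" "(k \<circ> g \<circ> h) ` X \<subseteq> X"
proof -
  have h: "continuous_on X h" "h ` X = Y" and k: "continuous_on Y k" "k ` Y = X"
    using assms(1) by (simp_all add: homeomorphism_def)
  have "continuous_on X (g \<circ> h)"
    using h assms(2) by (intro continuous_on_compose) simp_all
  moreover have "(g \<circ> h) ` X \<subseteq> Y"
    using h(2) assms(3) by auto
  ultimately have "continuous_on X (k \<circ> (g \<circ> h))"
    by (intro continuous_on_compose[of X "g \<circ> h" k] continuous_on_subset[OF k(1)])
  then show "continuous_on X (k \<circ> g \<circ> h)"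
    by (simp add: comp_assoc)
  show "(k \<circ> g \<circ> h) ` X \<subseteq> X"
    using \<open>(g \<circ> h) ` X \<subseteq> Y\<close> k(2) by (auto simp: image_subset_iff)
qed

lemma frequently_dist_less_uniformly_continuous_image:
  assumes uc: "uniformly_continuous_on S \<phi>" and "\<And>n. u n \<in> S" "\<And>n. v n \<in> S"
    and close: "\<forall>e>0. \<exists>\<^sub>F n in sequentially. dist (u n) (v n) < e"
  shows "\<forall>e>0. \<exists>\<^sub>F n in sequentially. dist (\<phi> (u n)) (\<phi> (v n)) < e"
proof (intro allI impI)
  fix e :: real assume "0 < e"
  then obtain \<delta> where "0 < \<delta>" and \<delta>: "\<forall>x\<in>S. \<forall>x'\<in>S. dist x' x < \<delta> \<longrightarrow> dist (\<phi> x') (\<phi> x) < e"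
    using uc unfolding uniformly_continuous_on_def by blast
  from close \<open>0 < \<delta>\<close> have "\<exists>\<^sub>F n in sequentially. dist (u n) (v n) < \<delta>"
    by blast
  then show "\<exists>\<^sub>F n in sequentially. dist (\<phi> (u n)) (\<phi> (v n)) < e"
    by (rule frequently_elim1) (use \<delta> assms(2,3) in blast)
qed

lemma uniformly_continuous_on_separation:
  assumes "uniformly_continuous_on S \<phi>" "0 < d"
  obtains \<delta> where "0 < \<delta>" "\<And>x y. x \<in> S \<Longrightarrow> y \<in> S \<Longrightarrow> d < dist (\<phi> x) (\<phi> y) \<Longrightarrow> \<delta> \<le> dist x y"
proof -
  obtain \<delta> where "0 < \<delta>" and \<delta>: "\<forall>x\<in>S. \<forall>x'\<in>S. dist x' x < \<delta> \<longrightarrow> dist (\<phi> x') (\<phi> x) < d"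
    using assms unfolding uniformly_continuous_on_def by blast
  then show thesis
    using that by (meson less_asym not_le)
qed

lemma homeomorphism_uniformly_continuous:
  fixes X :: "'a::metric_space set" and Y :: "'b::metric_space set"
  assumes "homeomorphism X Y h k" "compact Y"
  shows "uniformly_continuous_on X h" "uniformly_continuous_on Y k"
proof -
  have "compact X"
    using assms by (metis compact_continuous_image homeomorphism_def)
  then show "uniformly_continuous_on X h"
    using assms(1) by (intro compact_uniformly_continuous) (simp_all add: homeomorphism_def)
  show "uniformly_continuous_on Y k"
    using assms by (intro compact_uniformly_continuous) (simp_all add: homeomorphism_def)
qed

lemma li_yorke_pair_conjugate:
  assumes hom: "homeomorphism X Y h k" and "compact Y" "g ` Y \<subseteq> Y"
    and ab: "a \<in> Y" "b \<in> Y" "li_yorke_pair g a b"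
  shows "li_yorke_pair (k \<circ> g \<circ> h) (k a) (k b)"
proof -
  have hk: "\<forall>y\<in>Y. h (k y) = y" and kY: "k ` Y = X"
    using hom by (simp_all add: homeomorphism_def)
  note uc = homeomorphism_uniformly_continuous[OF hom \<open>compact Y\<close>]
  define u where "u n = (g ^^ n) a" for n
  define v where "v n = (g ^^ n) b" for n
  have uv: "u n \<in> Y" "v n \<in> Y" for n
    using funpow_in_set[OF \<open>g ` Y \<subseteq> Y\<close>] ab by (simp_all add: u_def v_def)
  have orbit: "((k \<circ> g \<circ> h) ^^ n) (k a) = k (u n)" "((k \<circ> g \<circ> h) ^^ n) (k b) = k (v n)" for n
    using funpow_conjugate[where h = h and k = k, OF hk \<open>g ` Y \<subseteq> Y\<close>] ab by (simp_all add: u_def v_def)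
  obtain d where "0 < d" and far: "\<exists>\<^sub>F n in sequentially. d < dist (u n) (v n)"
    and close: "\<forall>e>0. \<exists>\<^sub>F n in sequentially. dist (u n) (v n) < e"
    using ab(3) unfolding li_yorke_pair_iff u_def v_def by blast
  obtain \<delta> where "0 < \<delta>" and \<delta>: "\<And>x y. x \<in> X \<Longrightarrow> y \<in> X \<Longrightarrow> d < dist (h x) (h y) \<Longrightarrow> \<delta> \<le> dist x y"
    using uniformly_continuous_on_separation[OF uc(1) \<open>0 < d\<close>] by blast
  have "\<exists>\<^sub>F n in sequentially. \<delta> / 2 < dist (k (u n)) (k (v n))"
    using far
  proof (rule frequently_elim1)
    fix n assume "d < dist (u n) (v n)"
    then have "\<delta> \<le> dist (k (u n)) (k (v n))"
      using \<delta>[of "k (u n)" "k (v n)"] hk uv kY by auto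
    then show "\<delta> / 2 < dist (k (u n)) (k (v n))"
      using \<open>0 < \<delta>\<close> by linarith
  qed
  moreover have "\<forall>e>0. \<exists>\<^sub>F n in sequentially. dist (k (u n)) (k (v n)) < e"
    using frequently_dist_less_uniformly_continuous_image[OF uc(2) uv close] .
  ultimately show ?thesis
    unfolding li_yorke_pair_iff orbit using \<open>0 < \<delta>\<close> half_gt_zero by blast
qed

lemma eps_scrambled_pair_conjugate:
  assumes hom: "homeomorphism X Y h k" and "compact Y" "g ` Y \<subseteq> Y" and "0 < \<epsilon>"
  obtains \<delta> where "0 < \<delta>"
    "\<And>a b. a \<in> Y \<Longrightarrow> b \<in> Y \<Longrightarrow> eps_scrambled_pair (k \<circ> g \<circ> h) \<epsilon> (k a) (k b) \<Longrightarrow>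
      eps_scrambled_pair g \<delta> a b"
proof -
  have hk: "\<forall>y\<in>Y. h (k y) = y" and kY: "k ` Y \<subseteq> X"
    using hom by (simp_all add: homeomorphism_def)
  note uc = homeomorphism_uniformly_continuous[OF hom \<open>compact Y\<close>]
  obtain \<delta> where "0 < \<delta>" and \<delta>: "\<And>x y. x \<in> Y \<Longrightarrow> y \<in> Y \<Longrightarrow> \<epsilon> < dist (k x) (k y) \<Longrightarrow> \<delta> \<le> dist x y"
    using uniformly_continuous_on_separation[OF uc(2) \<open>0 < \<epsilon>\<close>] by blast
  show thesis
  proof (rule that[of "\<delta> / 2"])
    show "0 < \<delta> / 2"
      using \<open>0 < \<delta>\<close> by simp
    fix a b assume ab: "a \<in> Y" "b \<in> Y" "eps_scrambled_pair (k \<circ> g \<circ> h) \<epsilon> (k a) (k b)"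
    define u where "u n = (g ^^ n) a" for n
    define v where "v n = (g ^^ n) b" for n
    have uv: "u n \<in> Y" "v n \<in> Y" for n
      using funpow_in_set[OF \<open>g ` Y \<subseteq> Y\<close>] ab by (simp_all add: u_def v_def)
    have orbit: "((k \<circ> g \<circ> h) ^^ n) (k a) = k (u n)" "((k \<circ> g \<circ> h) ^^ n) (k b) = k (v n)" for n
      using funpow_conjugate[where h = h and k = k, OF hk \<open>g ` Y \<subseteq> Y\<close>] ab by (simp_all add: u_def v_def)
    obtain d where "\<epsilon> < d" and far: "\<exists>\<^sub>F n in sequentially. d < dist (k (u n)) (k (v n))"
      and close: "\<forall>e>0. \<exists>\<^sub>F n in sequentially. dist (k (u n)) (k (v n)) < e"
      using ab(3) unfolding eps_scrambled_pair_iff orbit by blast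
    have "\<exists>\<^sub>F n in sequentially. 3 * \<delta> / 4 < dist (u n) (v n)"
      using far
    proof (rule frequently_elim1)
      fix n assume "d < dist (k (u n)) (k (v n))"
      then have "\<delta> \<le> dist (u n) (v n)"
        using \<delta> uv \<open>\<epsilon> < d\<close> by simp
      then show "3 * \<delta> / 4 < dist (u n) (v n)"
        using \<open>0 < \<delta>\<close> by linarith
    qed
    moreover have "\<forall>e>0. \<exists>\<^sub>F n in sequentially. dist (h (k (u n))) (h (k (v n))) < e"
      using frequently_dist_less_uniformly_continuous_image[OF uc(1) _ _ close] kY uv by blast
    ultimately show "eps_scrambled_pair g (\<delta> / 2) a b"
      unfolding eps_scrambled_pair_iff using \<open>0 < \<delta>\<close> hk uv
      by (auto simp: u_def v_def intro!: exI[of _ "3 * \<delta> / 4"])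
  qed
qed

lemma generically_chaotic_conjugate:
  fixes X :: "'a::metric_space set" and Y :: "'b::metric_space set"
  assumes hom: "homeomorphism X Y h k" and "compact Y" "g ` Y \<subseteq> Y" and "generically_chaotic Y g"
  shows "generically_chaotic X (k \<circ> g \<circ> h)"
proof -
  let ?pairs = "{(a, b) \<in> Y \<times> Y. li_yorke_pair g a b}"
  have "residual_in (X \<times> X) (map_prod k k ` ?pairs)"
    using assms(4) unfolding generically_chaotic_def
    by (intro residual_in_homeomorphic_image[OF homeomorphism_square[OF homeomorphism_symD[OF hom]]])
      (simp_all add: closed_Times compact_imp_closed \<open>compact Y\<close>)
  moreover have "map_prod k k ` ?pairs \<subseteq> {(x, y) \<in> X \<times> X. li_yorke_pair (k \<circ> g \<circ> h) x y}"
    using li_yorke_pair_conjugate[OF hom \<open>compact Y\<close> \<open>g ` Y \<subseteq> Y\<close>] hom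
    by (auto simp: homeomorphism_def)
  ultimately show ?thesis
    unfolding generically_chaotic_def by (rule residual_in_mono) auto
qed

lemma generically_eps_chaotic_conjugate:
  fixes X :: "'a::metric_space set" and Y :: "'b::metric_space set"
  assumes hom: "homeomorphism X Y h k" and "compact Y" "g ` Y \<subseteq> Y" "0 < \<epsilon>"
    and "generically_eps_chaotic X (k \<circ> g \<circ> h) \<epsilon>"
  shows "\<exists>\<delta>>0. generically_eps_chaotic Y g \<delta>"
proof -
  obtain \<delta> where "0 < \<delta>" and \<delta>: "\<And>a b. a \<in> Y \<Longrightarrow> b \<in> Y \<Longrightarrow>
      eps_scrambled_pair (k \<circ> g \<circ> h) \<epsilon> (k a) (k b) \<Longrightarrow> eps_scrambled_pair g \<delta> a b"
    using eps_scrambled_pair_conjugate[OF hom \<open>compact Y\<close> \<open>g ` Y \<subseteq> Y\<close> \<open>0 < \<epsilon>\<close>] by blast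
  let ?pairs = "{(x, y) \<in> X \<times> X. eps_scrambled_pair (k \<circ> g \<circ> h) \<epsilon> x y}"
  have "compact X"
    using hom \<open>compact Y\<close> by (metis compact_continuous_image homeomorphism_def)
  then have "residual_in (Y \<times> Y) (map_prod h h ` ?pairs)"
    using assms(5) unfolding generically_eps_chaotic_def
    by (intro residual_in_homeomorphic_image[OF homeomorphism_square[OF hom]])
      (simp_all add: closed_Times compact_imp_closed)
  moreover have "map_prod h h ` ?pairs \<subseteq> {(a, b) \<in> Y \<times> Y. eps_scrambled_pair g \<delta> a b}"
  proof
    fix q assume "q \<in> map_prod h h ` ?pairs"
    then obtain x y where xy: "x \<in> X" "y \<in> X" "eps_scrambled_pair (k \<circ> g \<circ> h) \<epsilon> x y"
      and q: "q = (h x, h y)"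
      by auto
    moreover have "h x \<in> Y" "h y \<in> Y" "k (h x) = x" "k (h y) = y"
      using hom xy(1,2) unfolding homeomorphism_def by auto
    ultimately show "q \<in> {(a, b) \<in> Y \<times> Y. eps_scrambled_pair g \<delta> a b}"
      using \<delta>[of "h x" "h y"] by simp
  qed
  ultimately have "generically_eps_chaotic Y g \<delta>"
    unfolding generically_eps_chaotic_def by (rule residual_in_mono) auto
  then show ?thesis
    using \<open>0 < \<delta>\<close> by blast
qed

section \<open>Residuality criteria\<close>

lemma openin_orbit_dist_preimage:
  assumes "continuous_on S f" "f ` S \<subseteq> S" "open T"
  shows "openin (top_of_set (S \<times> S)) {(a, b) \<in> S \<times> S. dist ((f ^^ n) a) ((f ^^ n) b) \<in> T}"
proof -
  have "continuous_on (S \<times> S) (\<lambda>p. (f ^^ n) (fst p))" "continuous_on (S \<times> S) (\<lambda>p. (f ^^ n) (snd p))"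
    by (auto intro!: continuous_on_compose2[OF continuous_on_funpow[OF assms(1,2)]]
        continuous_on_fst[OF continuous_on_id] continuous_on_snd[OF continuous_on_id])
  then have "openin (top_of_set (S \<times> S))
      (S \<times> S \<inter> (\<lambda>p. dist ((f ^^ n) (fst p)) ((f ^^ n) (snd p))) -` T)"
    by (intro continuous_openin_preimage_gen continuous_on_dist assms(3))
  moreover have "S \<times> S \<inter> (\<lambda>p. dist ((f ^^ n) (fst p)) ((f ^^ n) (snd p))) -` T =
      {(a, b) \<in> S \<times> S. dist ((f ^^ n) a) ((f ^^ n) b) \<in> T}"
    by auto
  ultimately show ?thesis
    by simp
qed

lemma openin_exists_orbit_dist_less:
  assumes "continuous_on S f" "f ` S \<subseteq> S"
  shows "openin (top_of_set (S \<times> S)) {(a, b) \<in> S \<times> S. \<exists>n\<ge>m. dist ((f ^^ n) a) ((f ^^ n) b) < r}"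
proof -
  have "{(a, b) \<in> S \<times> S. \<exists>n\<ge>m. dist ((f ^^ n) a) ((f ^^ n) b) < r} =
      (\<Union>n\<in>{m..}. {(a, b) \<in> S \<times> S. dist ((f ^^ n) a) ((f ^^ n) b) \<in> {..<r}})"
    by auto
  moreover have "openin (top_of_set (S \<times> S)) {(a, b) \<in> S \<times> S. dist ((f ^^ n) a) ((f ^^ n) b) \<in> {..<r}}" for n
    by (rule openin_orbit_dist_preimage[OF assms]) simp
  ultimately show ?thesis
    by (metis (no_types, lifting) imageE openin_Union)
qed

lemma openin_exists_orbit_dist_greater:
  assumes "continuous_on S f" "f ` S \<subseteq> S" "\<And>N. openin (top_of_set S) (P N)"
  shows "openin (top_of_set (S \<times> S))
    {(a, b) \<in> S \<times> S. \<exists>N. a \<in> P N \<and> (\<exists>n\<ge>m. \<theta> N < dist ((f ^^ n) a) ((f ^^ n) b))}"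
proof -
  let ?G = "\<lambda>N n. (P N \<times> S) \<inter> {(a, b) \<in> S \<times> S. dist ((f ^^ n) a) ((f ^^ n) b) \<in> {\<theta> N<..}}"
  have "{(a, b) \<in> S \<times> S. \<exists>N. a \<in> P N \<and> (\<exists>n\<ge>m. \<theta> N < dist ((f ^^ n) a) ((f ^^ n) b))} =
      (\<Union>N. \<Union>n\<in>{m..}. ?G N n)"
    using assms(3) openin_imp_subset by fastforce
  moreover have "openin (top_of_set (S \<times> S)) (?G N n)" for N n
    using assms(3) openin_orbit_dist_preimage[OF assms(1,2), of "{\<theta> N<..}" n]
    by (intro openin_Int openin_Times) simp_all
  then have "openin (top_of_set (S \<times> S)) (\<Union>n\<in>{m..}. ?G N n)" for N
    by (intro openin_Union) blast
  ultimately show ?thesis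
    by (metis (no_types, lifting) openin_Union rangeE)
qed

lemma liminf_orbit_dist_eq_0I:
  assumes "\<And>m. \<exists>n\<ge>m. dist ((f ^^ n) x) ((f ^^ n) y) < 1 / Suc m"
  shows "liminf (orbit_dist f x y) = 0"
proof -
  have "\<exists>\<^sub>F n in sequentially. dist ((f ^^ n) x) ((f ^^ n) y) < e" if "0 < e" for e
    unfolding frequently_sequentially
  proof
    fix N
    obtain M where M: "inverse (real (Suc M)) < e"
      using reals_Archimedean[OF \<open>0 < e\<close>] by blast
    obtain n where "n \<ge> M + N" "dist ((f ^^ n) x) ((f ^^ n) y) < 1 / Suc (M + N)"
      using assms by blast
    moreover have "1 / real (Suc (M + N)) \<le> inverse (real (Suc M))"
      by (simp add: inverse_eq_divide frac_le)
    ultimately show "\<exists>n\<ge>N. dist ((f ^^ n) x) ((f ^^ n) y) < e"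
      using M by (intro exI[of _ n]) auto
  qed
  then show ?thesis
    unfolding orbit_dist_def by (subst liminf_eq_0_iff_frequently_less) simp_all
qed

lemma residual_in_liminf_orbit_dist_eq_0:
  fixes S :: "'a::metric_space set"
  assumes "continuous_on S f" "f ` S \<subseteq> S"
    and dense: "S \<times> S \<subseteq> closure {(a, b) \<in> S \<times> S. \<exists>n. (f ^^ n) a = (f ^^ n) b}"
  shows "residual_in (S \<times> S) {(x, y) \<in> S \<times> S. liminf (orbit_dist f x y) = 0}"
proof -
  define G where "G m = {(a, b) \<in> S \<times> S. \<exists>n\<ge>m. dist ((f ^^ n) a) ((f ^^ n) b) < 1 / Suc m}" for m
  show ?thesis
  proof (rule residual_inI)
    show "openin (top_of_set (S \<times> S)) (G m)" for m
      unfolding G_def using assms(1,2) by (rule openin_exists_orbit_dist_less)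
    show "S \<times> S \<subseteq> closure (G m)" for m
    proof -
      have "{(a, b) \<in> S \<times> S. \<exists>n. (f ^^ n) a = (f ^^ n) b} \<subseteq> G m"
      proof clarify
        fix a b n assume "a \<in> S" "b \<in> S" "(f ^^ n) a = (f ^^ n) b"
        then have "dist ((f ^^ (m + n)) a) ((f ^^ (m + n)) b) = 0"
          by (simp add: funpow_add)
        then have "\<exists>n'\<ge>m. dist ((f ^^ n') a) ((f ^^ n') b) < 1 / Suc m"
          by (intro exI[of _ "m + n"]) auto
        then show "(a, b) \<in> G m"
          using \<open>a \<in> S\<close> \<open>b \<in> S\<close> by (simp add: G_def)
      qed
      then show ?thesis
        using dense closure_mono by blast
    qed
    show "S \<times> S \<inter> (\<Inter>m. G m) \<subseteq> {(x, y) \<in> S \<times> S. liminf (orbit_dist f x y) = 0}"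
    proof
      fix p assume p: "p \<in> S \<times> S \<inter> (\<Inter>m. G m)"
      then obtain x y where p_eq: "p = (x, y)" and "x \<in> S" "y \<in> S"
        by auto
      have "\<exists>n\<ge>m. dist ((f ^^ n) x) ((f ^^ n) y) < 1 / Suc m" for m
        using p p_eq by (auto simp: G_def)
      then show "p \<in> {(x, y) \<in> S \<times> S. liminf (orbit_dist f x y) = 0}"
        using p_eq \<open>x \<in> S\<close> \<open>y \<in> S\<close> by (simp add: liminf_orbit_dist_eq_0I)
    qed
  qed auto
qed

lemma limsup_orbit_dist_posI:
  assumes "0 < \<theta>" "\<And>m. \<exists>n\<ge>m. \<theta> < dist ((f ^^ n) x) ((f ^^ n) y)"
  shows "0 < limsup (orbit_dist f x y)"
proof -
  have "ereal 0 < limsup (orbit_dist f x y)"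
    unfolding orbit_dist_def less_limsup_iff_frequently_less frequently_sequentially
    using assms by blast
  then show ?thesis
    by (simp add: zero_ereal_def)
qed

lemma residual_in_limsup_orbit_dist_pos:
  fixes S :: "'a::metric_space set"
  assumes "continuous_on S f" "f ` S \<subseteq> S"
    and P: "\<And>N. openin (top_of_set S) (P N)" "disjoint_family P" and \<theta>: "\<And>N. 0 < \<theta> N"
    and dense: "\<And>m. S \<times> S \<subseteq> closure {(a, b) \<in> S \<times> S.
      \<exists>N. a \<in> P N \<and> (\<exists>n\<ge>m. \<theta> N < dist ((f ^^ n) a) ((f ^^ n) b))}"
  shows "residual_in (S \<times> S) {(x, y) \<in> S \<times> S. 0 < limsup (orbit_dist f x y)}"
proof -
  define G where
    "G m = {(a, b) \<in> S \<times> S. \<exists>N. a \<in> P N \<and> (\<exists>n\<ge>m. \<theta> N < dist ((f ^^ n) a) ((f ^^ n) b))}" for m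
  show ?thesis
  proof (rule residual_inI)
    show "openin (top_of_set (S \<times> S)) (G m)" for m
      unfolding G_def using assms(1,2) P(1) by (rule openin_exists_orbit_dist_greater)
    show "S \<times> S \<subseteq> closure (G m)" for m
      using dense[of m] by (simp add: G_def)
    show "S \<times> S \<inter> (\<Inter>m. G m) \<subseteq> {(x, y) \<in> S \<times> S. 0 < limsup (orbit_dist f x y)}"
    proof
      fix p assume p: "p \<in> S \<times> S \<inter> (\<Inter>m. G m)"
      then obtain x y where p_eq: "p = (x, y)" and "x \<in> S" "y \<in> S"
        by auto
      have G: "(x, y) \<in> G m" for m
        using p p_eq by auto
      obtain N where "x \<in> P N"
        using G[of 0] by (auto simp: G_def)
      \<comment> \<open>by disjointness the threshold \<open>\<theta> N\<close> does not depend on \<open>m\<close>\<close>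
      have "\<exists>n\<ge>m. \<theta> N < dist ((f ^^ n) x) ((f ^^ n) y)" for m
      proof -
        obtain N' n where "x \<in> P N'" "n \<ge> m" "\<theta> N' < dist ((f ^^ n) x) ((f ^^ n) y)"
          using G[of m] by (auto simp: G_def)
        moreover have "N' = N"
          using P(2) \<open>x \<in> P N\<close> \<open>x \<in> P N'\<close> by (auto simp: disjoint_family_on_def)
        ultimately show ?thesis
          by blast
      qed
      then have "0 < limsup (orbit_dist f x y)"
        by (rule limsup_orbit_dist_posI[OF \<theta>])
      then show "p \<in> {(x, y) \<in> S \<times> S. 0 < limsup (orbit_dist f x y)}"
        using p_eq \<open>x \<in> S\<close> \<open>y \<in> S\<close> by simp
    qed
  qed auto
qed

lemma not_generically_eps_chaotic_if_bounded_orbits: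
  fixes S :: "'a::{real_normed_vector,heine_borel} set"
  assumes "closed S" "openin (top_of_set (S \<times> S)) U" "U \<noteq> {}"
    and bounded: "\<And>a b n. (a, b) \<in> U \<Longrightarrow> dist ((f ^^ n) a) ((f ^^ n) b) \<le> \<epsilon>"
  shows "\<not> generically_eps_chaotic S f \<epsilon>"
proof
  assume "generically_eps_chaotic S f \<epsilon>"
  then obtain a b where "(a, b) \<in> U" "eps_scrambled_pair f \<epsilon> a b"
    using residual_in_meets_openin[OF closed_Times[OF assms(1,1)]] assms(2,3)
    unfolding generically_eps_chaotic_def by blast
  then have "ereal \<epsilon> < limsup (orbit_dist f a b)"
    by (simp add: eps_scrambled_pair_def)
  moreover have "limsup (orbit_dist f a b) \<le> ereal \<epsilon>"
    unfolding orbit_dist_def by (rule Limsup_bounded) (simp add: bounded[OF \<open>(a, b) \<in> U\<close>])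
  ultimately show False
    by simp
qed

section \<open>Ternary coding of the Cantor set\<close>

definition shift :: "nat \<Rightarrow> (nat \<Rightarrow> 'a) \<Rightarrow> nat \<Rightarrow> 'a" where
  "shift n w = (\<lambda>i. w (i + n))"

definition agree :: "nat \<Rightarrow> (nat \<Rightarrow> 'a) \<Rightarrow> (nat \<Rightarrow> 'a) \<Rightarrow> bool" where
  "agree n a b \<longleftrightarrow> (\<forall>i<n. a i = b i)"

lemma shift_0 [simp]: "shift 0 w = w"
  by (simp add: shift_def)

lemma shift_shift [simp]: "shift m (shift n w) = shift (m + n) w"
  by (simp add: shift_def add.assoc)

definition first_one :: "(nat \<Rightarrow> bool) \<Rightarrow> nat" where
  "first_one w = (LEAST i. w i)"

lemma first_one_holds: "w i \<Longrightarrow> w (first_one w)"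
  unfolding first_one_def by (rule LeastI)

lemma not_less_first_one: "i < first_one w \<Longrightarrow> \<not> w i"
  unfolding first_one_def by (rule not_less_Least)

lemma first_one_le: "w i \<Longrightarrow> first_one w \<le> i"
  unfolding first_one_def by (rule Least_le)

lemma first_one_eqI: "w N \<Longrightarrow> (\<And>i. i < N \<Longrightarrow> \<not> w i) \<Longrightarrow> first_one w = N"
  unfolding first_one_def by (rule Least_equality) (auto simp: not_less[symmetric])

definition cantor_point :: "(nat \<Rightarrow> bool) \<Rightarrow> real" where
  "cantor_point w = (\<Sum>i. (if w i then 2 else 0) / 3 ^ Suc i)"

lemma summable_cantor_digits: "summable (\<lambda>i. (if w i then 2 else 0) / 3 ^ Suc i :: real)"
proof (rule summable_comparison_test)
  show "summable (\<lambda>i. 2 / 3 * (1 / 3) ^ i :: real)"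
    by (intro summable_mult summable_geometric) simp
  show "\<exists>N. \<forall>n\<ge>N. norm ((if w n then 2 else 0) / 3 ^ Suc n :: real) \<le> 2 / 3 * (1 / 3) ^ n"
    by (simp add: power_divide)
qed

lemma cantor_point_shift: "cantor_point w = (if w 0 then 2 / 3 else 0) + cantor_point (shift 1 w) / 3"
proof -
  have "cantor_point (shift 1 w) / 3 = (\<Sum>i. (if w (Suc i) then 2 else 0) / 3 ^ Suc (Suc i))"
    unfolding cantor_point_def shift_def
    by (subst suminf_divide[OF summable_cantor_digits, symmetric]) (simp add: mult.commute)
  also have "\<dots> = cantor_point w - (if w 0 then 2 / 3 else 0)"
    unfolding cantor_point_def using suminf_split_head[OF summable_cantor_digits[of w]] by simp
  finally show ?thesis
    by linarith
qed

lemma cantor_point_prefix: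
  "cantor_point w = (\<Sum>i<n. (if w i then 2 else 0) / 3 ^ Suc i) + cantor_point (shift n w) / 3 ^ n"
proof (induction n)
  case 0
  then show ?case
    by simp
next
  case (Suc n)
  have "cantor_point (shift n w) = (if w n then 2 / 3 else 0) + cantor_point (shift (Suc n) w) / 3"
    using cantor_point_shift[of "shift n w"] by (simp add: shift_def)
  with Suc show ?case
    by (simp add: add_divide_distrib)
qed

lemma cantor_point_bounds: "0 \<le> cantor_point w" "cantor_point w \<le> 1"
proof -
  have geometric: "(\<lambda>i. 2 / 3 * (1 / 3) ^ i :: real) sums 1"
    using sums_mult[OF geometric_sums[of "1 / 3 :: real"], of "2 / 3"] by simp
  show "0 \<le> cantor_point w"
    unfolding cantor_point_def by (intro suminf_nonneg summable_cantor_digits) simp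
  have "cantor_point w \<le> (\<Sum>i. 2 / 3 * (1 / 3) ^ i)"
    unfolding cantor_point_def using geometric
    by (intro suminf_le summable_cantor_digits) (auto simp: sums_iff power_divide)
  then show "cantor_point w \<le> 1"
    using geometric by (simp add: sums_iff)
qed

lemma cantor_point_zero [simp]: "cantor_point (\<lambda>_. False) = 0"
  by (simp add: cantor_point_def)

lemma cantor_point_diff_agree:
  assumes "agree n a b"
  shows "cantor_point a - cantor_point b = (cantor_point (shift n a) - cantor_point (shift n b)) / 3 ^ n"
proof -
  have "(\<Sum>i<n. (if a i then 2 else 0) / 3 ^ Suc i) = (\<Sum>i<n. (if b i then 2 else 0) / 3 ^ Suc i :: real)"
    using assms by (intro sum.cong) (auto simp: agree_def)
  then show ?thesis
    using cantor_point_prefix[of a n] cantor_point_prefix[of b n] by (simp add: diff_divide_distrib)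
qed

lemma cantor_point_dist_agree: "agree n a b \<Longrightarrow> \<bar>cantor_point a - cantor_point b\<bar> \<le> 1 / 3 ^ n"
  using cantor_point_bounds[of "shift n a"] cantor_point_bounds[of "shift n b"]
  by (simp add: cantor_point_diff_agree abs_divide divide_right_mono)

lemma cantor_point_dist_first_difference:
  assumes "agree n a b" "a n \<noteq> b n"
  shows "1 / 3 ^ Suc n \<le> \<bar>cantor_point a - cantor_point b\<bar>"
proof -
  have "1 / 3 \<le> \<bar>cantor_point (shift n a) - cantor_point (shift n b)\<bar>"
    using cantor_point_shift[of "shift n a"] cantor_point_shift[of "shift n b"] assms(2)
      cantor_point_bounds[of "shift 1 (shift n a)"] cantor_point_bounds[of "shift 1 (shift n b)"]
    by (cases "a n") (auto simp: shift_def)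
  then have "1 / 3 / 3 ^ n \<le> \<bar>cantor_point (shift n a) - cantor_point (shift n b)\<bar> / 3 ^ n"
    by (rule divide_right_mono) simp
  then show ?thesis
    using cantor_point_diff_agree[OF assms(1)] by (simp add: abs_divide)
qed

lemma agree_if_cantor_point_dist_less:
  assumes "\<bar>cantor_point a - cantor_point b\<bar> < 1 / 3 ^ n"
  shows "agree n a b"
proof (rule ccontr)
  assume "\<not> agree n a b"
  then obtain i where "i < n" "a i \<noteq> b i"
    by (auto simp: agree_def)
  define j where "j = first_one (\<lambda>j. a j \<noteq> b j)"
  have "a j \<noteq> b j" "j \<le> i" "agree j a b"
    using first_one_holds[of "\<lambda>j. a j \<noteq> b j", OF \<open>a i \<noteq> b i\<close>]
      first_one_le[of "\<lambda>j. a j \<noteq> b j", OF \<open>a i \<noteq> b i\<close>]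
      not_less_first_one[of _ "\<lambda>j. a j \<noteq> b j"]
    by (simp_all add: j_def agree_def)
  then have "1 / 3 ^ Suc j \<le> \<bar>cantor_point a - cantor_point b\<bar>"
    by (intro cantor_point_dist_first_difference)
  moreover have "1 / 3 ^ n \<le> (1 / 3 ^ Suc j :: real)"
    using \<open>j \<le> i\<close> \<open>i < n\<close> by (intro divide_left_mono power_increasing) auto
  ultimately show False
    using assms by linarith
qed

lemma inj_cantor_point: "inj cantor_point"
proof (rule injI)
  fix a b assume "cantor_point a = cantor_point b"
  then have "agree (Suc i) a b" for i
    by (intro agree_if_cantor_point_dist_less) simp
  then show "a = b"
    by (auto simp: agree_def)
qed

lemma cantor_point_first_one_bounds:
  assumes "w i"
  shows "2 / 3 ^ Suc (first_one w) \<le> cantor_point w" "cantor_point w \<le> 1 / 3 ^ first_one w"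
proof -
  define N where "N = first_one w"
  have "agree N w (\<lambda>_. False)"
    using not_less_first_one[of _ w] by (simp add: agree_def N_def)
  then have "cantor_point w = cantor_point (shift N w) / 3 ^ N"
    using cantor_point_diff_agree[of N w "\<lambda>_. False"] by (simp add: shift_def)
  also have "cantor_point (shift N w) = 2 / 3 + cantor_point (shift 1 (shift N w)) / 3"
    using cantor_point_shift[of "shift N w"] first_one_holds[of w, OF assms]
    by (simp add: shift_def N_def)
  finally have "cantor_point w = (2 / 3 + cantor_point (shift (Suc N) w) / 3) / 3 ^ N"
    by simp
  then show "2 / 3 ^ Suc (first_one w) \<le> cantor_point w" "cantor_point w \<le> 1 / 3 ^ first_one w"
    using cantor_point_bounds[of "shift (Suc N) w"]
    by (simp_all add: N_def divide_right_mono field_simps)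
qed

lemma cantor_point_in_interval_iff:
  "1 / 3 ^ Suc N < cantor_point w \<and> cantor_point w < 2 / 3 ^ N \<longleftrightarrow> (\<exists>i. w i) \<and> first_one w = N"
proof
  assume "(\<exists>i. w i) \<and> first_one w = N"
  then have "2 / 3 ^ Suc N \<le> cantor_point w" "cantor_point w \<le> 1 / 3 ^ N"
    using cantor_point_first_one_bounds[of w] by auto
  moreover have "1 / 3 ^ Suc N < (2 / 3 ^ Suc N :: real)" "1 / 3 ^ N < (2 / 3 ^ N :: real)"
    by (simp_all add: divide_strict_right_mono)
  ultimately show "1 / 3 ^ Suc N < cantor_point w \<and> cantor_point w < 2 / 3 ^ N"
    by linarith
next
  assume interval: "1 / 3 ^ Suc N < cantor_point w \<and> cantor_point w < 2 / 3 ^ N"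
  then have "w \<noteq> (\<lambda>_. False)"
    by auto
  then obtain i where "w i"
    by auto
  note bounds = cantor_point_first_one_bounds[of w, OF this]
  have "first_one w = N"
  proof (rule linorder_cases[of "first_one w" N])
    assume "first_one w < N"
    then have "2 / 3 ^ N \<le> (2 / 3 ^ Suc (first_one w) :: real)"
      by (intro divide_left_mono power_increasing) auto
    then show ?thesis
      using bounds interval by linarith
  next
    assume "N < first_one w"
    then have "1 / 3 ^ first_one w \<le> (1 / 3 ^ Suc N :: real)"
      by (intro divide_left_mono power_increasing) auto
    then show ?thesis
      using bounds interval by linarith
  qed
  then show "(\<exists>i. w i) \<and> first_one w = N"
    using \<open>w i\<close> by blast
qed

lemma cantor_level_subset: "cantor_level n \<subseteq> {0..1}"
  by (induction n) auto

lemma cantor_set_subset: "cantor_set \<subseteq> {0..1}"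
  unfolding cantor_set_def using cantor_level_subset[of 0] by blast

lemma compact_cantor_level: "compact (cantor_level n)"
  by (induction n) (auto intro!: compact_Un compact_continuous_image continuous_intros)

lemma compact_cantor_set: "compact cantor_set"
proof -
  have "closed cantor_set"
    unfolding cantor_set_def by (rule closed_INT) (simp add: compact_imp_closed compact_cantor_level)
  moreover have "bounded cantor_set"
    using cantor_set_subset bounded_subset bounded_closed_interval by blast
  ultimately show ?thesis
    by (simp add: compact_eq_bounded_closed)
qed

lemma cantor_point_in_cantor_set: "cantor_point w \<in> cantor_set"
proof -
  have "cantor_point w \<in> cantor_level n" for n
  proof (induction n arbitrary: w)
    case 0
    then show ?case
      using cantor_point_bounds by simp
  next
    case (Suc n)
    then show ?case
      using Suc[of "shift 1 w"] cantor_point_shift[of w] by (cases "w 0") auto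
  qed
  then show ?thesis
    by (simp add: cantor_set_def)
qed

definition cantor_tripling :: "real \<Rightarrow> real" where
  "cantor_tripling y = (if y \<le> 1 / 2 then 3 * y else 3 * y - 2)"

lemma cantor_tripling_in_cantor_set:
  assumes "y \<in> cantor_set"
  shows "cantor_tripling y \<in> cantor_set"
proof -
  have "cantor_tripling y \<in> cantor_level n" for n
  proof -
    have "y \<in> cantor_level (Suc n)"
      using assms unfolding cantor_set_def by blast
    then consider z where "z \<in> cantor_level n" "y = z / 3"
      | z where "z \<in> cantor_level n" "y = z / 3 + 2 / 3"
      by auto
    then show ?thesis
    proof cases
      case (1 z)
      moreover have "z \<in> {0..1}"
        using 1 cantor_level_subset by blast
      ultimately have "cantor_tripling y = z"
        by (auto simp: cantor_tripling_def)
      then show ?thesis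
        using 1(1) by simp
    next
      case (2 z)
      moreover have "z \<in> {0..1}"
        using 2 cantor_level_subset by blast
      ultimately have "cantor_tripling y = z"
        by (auto simp: cantor_tripling_def)
      then show ?thesis
        using 2(1) by simp
    qed
  qed
  then show ?thesis
    by (simp add: cantor_set_def)
qed

lemma cantor_tripling_expansion:
  "x = (\<Sum>i<n. (if 1 / 2 < (cantor_tripling ^^ i) x then 2 else 0) / 3 ^ Suc i)
     + (cantor_tripling ^^ n) x / 3 ^ n"
proof -
  define y where "y n = (cantor_tripling ^^ n) x" for n
  have "x = (\<Sum>i<n. (if 1 / 2 < y i then 2 else 0) / 3 ^ Suc i) + y n / 3 ^ n"
  proof (induction n)
    case 0
    then show ?case
      by (simp add: y_def)
  next
    case (Suc n)
    have "y n / 3 ^ n = (if 1 / 2 < y n then 2 else 0) / 3 ^ Suc n + y (Suc n) / 3 ^ Suc n"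
      by (cases "1 / 2 < y n") (simp_all add: y_def cantor_tripling_def field_simps)
    with Suc show ?case
      by simp
  qed
  then show ?thesis
    by (simp add: y_def)
qed

lemma cantor_point_surj:
  assumes "x \<in> cantor_set"
  shows "\<exists>w. cantor_point w = x"
proof -
  define w where "w i = (1 / 2 < (cantor_tripling ^^ i) x)" for i
  have close: "\<bar>cantor_point w - x\<bar> \<le> 1 / 3 ^ n" for n
  proof -
    have "(cantor_tripling ^^ n) x \<in> cantor_set"
      using assms cantor_tripling_in_cantor_set by (induction n) simp_all
    then have "\<bar>cantor_point (shift n w) - (cantor_tripling ^^ n) x\<bar> \<le> 1"
      using cantor_point_bounds[of "shift n w"] cantor_set_subset by fastforce
    moreover have "cantor_point w - x = cantor_point (shift n w) / 3 ^ n - (cantor_tripling ^^ n) x / 3 ^ n"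
      using cantor_point_prefix[of w n] cantor_tripling_expansion[of x n] unfolding w_def by linarith
    ultimately show ?thesis
      by (simp add: diff_divide_distrib[symmetric] abs_divide divide_right_mono)
  qed
  have "cantor_point w = x"
  proof (rule ccontr)
    assume "cantor_point w \<noteq> x"
    then obtain n where "(1 / 3) ^ n < \<bar>cantor_point w - x\<bar>"
      using real_arch_pow_inv[of "\<bar>cantor_point w - x\<bar>" "1 / 3"] by auto
    with close[of n] show False
      by (simp add: power_divide)
  qed
  then show ?thesis
    by blast
qed

section \<open>The block shift on binary sequences\<close>

lemma prod_encode_mono: "a \<le> c \<Longrightarrow> b \<le> d \<Longrightarrow> prod_encode (a, b) \<le> prod_encode (c, d)"
proof -
  assume "a \<le> c" "b \<le> d"
  then have "triangle (a + b) \<le> triangle (c + d)"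
    unfolding triangle_def by (intro div_le_mono mult_le_mono) auto
  then show ?thesis
    using \<open>a \<le> c\<close> by (simp add: prod_encode_def)
qed

text \<open>\<open>to_block k s\<close> translates \<open>s\<close> so that its first one lands at \<open>prod_encode (k, first_one s)\<close>,
  from which \<open>block_index\<close> and \<open>block_offset\<close> read \<open>k\<close> and \<open>first_one s\<close> back. The value of
  \<open>first_one\<close> on the zero sequence is unspecified, but all these maps send the zero sequence to
  itself regardless.\<close>

definition to_block :: "nat \<Rightarrow> (nat \<Rightarrow> bool) \<Rightarrow> nat \<Rightarrow> bool" where
  "to_block k s = (\<lambda>i. prod_encode (k, first_one s) \<le> i \<and> s (i - prod_encode (k, first_one s) + first_one s))"

definition block_index :: "(nat \<Rightarrow> bool) \<Rightarrow> nat" where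
  "block_index w = fst (prod_decode (first_one w))"

definition block_offset :: "(nat \<Rightarrow> bool) \<Rightarrow> nat" where
  "block_offset w = snd (prod_decode (first_one w))"

definition from_block :: "(nat \<Rightarrow> bool) \<Rightarrow> nat \<Rightarrow> bool" where
  "from_block w = (\<lambda>i. block_offset w \<le> i \<and> w (i - block_offset w + first_one w))"

definition block_shift :: "(nat \<Rightarrow> bool) \<Rightarrow> nat \<Rightarrow> bool" where
  "block_shift w = to_block (block_index w) (shift 1 (from_block w))"

lemma prod_encode_block_index_offset: "prod_encode (block_index w, block_offset w) = first_one w"
  by (simp add: block_index_def block_offset_def)

lemma block_offset_le_first_one: "block_offset w \<le> first_one w"
  using le_prod_encode_2[of "block_offset w" "block_index w"] by (simp add: prod_encode_block_index_offset)

lemma shift_zero [simp]: "shift n (\<lambda>_. False) = (\<lambda>_. False)"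
  by (simp add: shift_def)

lemma to_block_zero [simp]: "to_block k (\<lambda>_. False) = (\<lambda>_. False)"
  by (simp add: to_block_def)

lemma from_block_zero [simp]: "from_block (\<lambda>_. False) = (\<lambda>_. False)"
  by (simp add: from_block_def)

lemma block_shift_zero [simp]: "block_shift (\<lambda>_. False) = (\<lambda>_. False)"
  by (simp add: block_shift_def)

lemma to_block_imp:
  assumes "to_block k s i"
  shows "k \<le> i" "\<exists>j\<le>i. s j"
proof -
  let ?P = "prod_encode (k, first_one s)"
  have "?P \<le> i \<and> s (i - ?P + first_one s)"
    using assms by (simp only: to_block_def)
  then have "?P \<le> i" "s (i - ?P + first_one s)"
    by auto
  moreover have "k \<le> ?P" "first_one s \<le> ?P"
    by (simp_all add: le_prod_encode_1 le_prod_encode_2)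
  moreover have "i - ?P + first_one s \<le> i"
    using \<open>?P \<le> i\<close> \<open>first_one s \<le> ?P\<close> by linarith
  ultimately show "k \<le> i" "\<exists>j\<le>i. s j"
    by auto
qed

lemma agree_to_block_zero: "agree k (to_block k s) (\<lambda>_. False)"
  unfolding agree_def by (auto dest: to_block_imp(1))

lemma first_one_to_block:
  assumes "s j"
  shows "first_one (to_block k s) = prod_encode (k, first_one s)"
  using first_one_holds[of s, OF assms] by (intro first_one_eqI) (auto simp: to_block_def)

lemma from_block_to_block:
  assumes "s j"
  shows "block_index (to_block k s) = k" "from_block (to_block k s) = s"
proof -
  define P where "P = prod_encode (k, first_one s)"
  have first: "first_one (to_block k s) = P"
    using first_one_to_block[where s = s and k = k, OF assms] by (simp add: P_def)
  then show "block_index (to_block k s) = k"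
    by (simp add: block_index_def P_def)
  have offset: "block_offset (to_block k s) = first_one s"
    using first by (simp add: block_offset_def P_def)
  have "first_one s \<le> P"
    by (simp add: P_def le_prod_encode_2)
  show "from_block (to_block k s) = s"
  proof
    fix i
    have "from_block (to_block k s) i \<longleftrightarrow> first_one s \<le> i \<and> to_block k s (i - first_one s + P)"
      by (simp add: from_block_def offset first)
    also have "\<dots> \<longleftrightarrow> first_one s \<le> i \<and> s i"
      using \<open>first_one s \<le> P\<close> by (auto simp: to_block_def P_def[symmetric])
    also have "\<dots> \<longleftrightarrow> s i"
      using first_one_le[of s i] by auto
    finally show "from_block (to_block k s) i = s i" .
  qed
qed

lemma to_block_from_block: "to_block (block_index w) (from_block w) = w"
proof (cases "\<exists>j. w j")
  case False
  then have "w = (\<lambda>_. False)"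
    by auto
  then show ?thesis
    by simp
next
  case True
  then obtain j where "w j" ..
  have "first_one (from_block w) = block_offset w"
    using first_one_holds[of w, OF \<open>w j\<close>] by (intro first_one_eqI) (auto simp: from_block_def)
  then have "to_block (block_index w) (from_block w) i \<longleftrightarrow> first_one w \<le> i \<and> w i" for i
    using block_offset_le_first_one[of w]
    by (auto simp: to_block_def from_block_def prod_encode_block_index_offset)
  then show ?thesis
    using first_one_le[of w] by auto
qed

lemma block_shift_to_block: "block_shift (to_block k s) = to_block k (shift 1 s)"
proof (cases "\<exists>j. s j")
  case True
  then show ?thesis
    using from_block_to_block by (auto simp: block_shift_def)
next
  case False
  then have "s = (\<lambda>_. False)"
    by auto
  then show ?thesis
    by simp
qed

lemma funpow_block_shift_to_block: "(block_shift ^^ n) (to_block k s) = to_block k (shift n s)"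
  by (induction n) (simp_all add: block_shift_to_block)

lemma funpow_block_shift: "(block_shift ^^ n) w = to_block (block_index w) (shift n (from_block w))"
  using funpow_block_shift_to_block[of n "block_index w" "from_block w"] by (simp add: to_block_from_block)

lemma shift_from_block:
  assumes "block_offset w \<le> n"
  shows "shift n (from_block w) = shift (n + first_one w - block_offset w) w"
proof
  fix i
  have "i + n - block_offset w + first_one w = i + (n + first_one w - block_offset w)"
    using assms block_offset_le_first_one[of w] by arith
  then show "shift n (from_block w) i = shift (n + first_one w - block_offset w) w i"
    using assms by (simp add: shift_def from_block_def)
qed

lemma funpow_block_shift_eventually_zero:
  assumes "\<And>i. L \<le> i \<Longrightarrow> \<not> w i" "L \<le> n"
  shows "(block_shift ^^ n) w = (\<lambda>_. False)"
proof -
  have "shift n (from_block w) = (\<lambda>_. False)"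
    using assms block_offset_le_first_one[of w] by (auto simp: shift_def from_block_def)
  then show ?thesis
    by (simp add: funpow_block_shift)
qed

lemma agree_to_block:
  assumes "agree n s s'"
  shows "agree n (to_block k s) (to_block k s')"
proof (cases "\<exists>j<n. s j")
  case True
  then obtain j where "j < n" "s j"
    by blast
  then have "first_one s < n"
    using first_one_le[of s j] by simp
  then have "first_one s' = first_one s"
    using assms first_one_holds[of s, OF \<open>s j\<close>] not_less_first_one[of _ s]
    by (intro first_one_eqI) (auto simp: agree_def)
  then show ?thesis
    using assms le_prod_encode_2[of "first_one s" k] unfolding agree_def to_block_def by auto
next
  case False
  then have "\<not> s' i" if "i < n" for i
    using assms that by (auto simp: agree_def)
  then have "\<not> to_block k s i" "\<not> to_block k s' i" if "i < n" for i
    using False that to_block_imp(2)[of k s i] to_block_imp(2)[of k s' i] by force+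
  then show ?thesis
    by (simp add: agree_def)
qed

lemma block_shift_imp_bounds:
  assumes "block_shift w i"
  shows "block_index w \<le> i" "block_offset w \<le> Suc i" "\<exists>j. w j"
proof -
  have "to_block (block_index w) (shift 1 (from_block w)) i"
    using assms by (simp add: block_shift_def)
  note to_block = to_block_imp[OF this]
  then show "block_index w \<le> i"
    by simp
  from to_block(2) obtain j where "j \<le> i" "from_block w (Suc j)"
    by (auto simp: shift_def)
  then show "block_offset w \<le> Suc i" "\<exists>j. w j"
    by (auto simp: from_block_def)
qed

lemma agree_block_shift_nonzero:
  assumes "w j" "agree (first_one w + n + 2) w w'"
  shows "agree n (block_shift w) (block_shift w')"
proof -
  have "first_one w' = first_one w"
    using assms first_one_holds[of w, OF \<open>w j\<close>] not_less_first_one[of _ w]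
    by (intro first_one_eqI) (auto simp: agree_def)
  then have same: "block_index w' = block_index w" "block_offset w' = block_offset w"
    by (simp_all add: block_index_def block_offset_def)
  have "agree (Suc n) (from_block w) (from_block w')"
    using assms(2) block_offset_le_first_one[of w]
    by (auto simp: agree_def from_block_def same \<open>first_one w' = first_one w\<close>)
  then have "agree n (shift 1 (from_block w)) (shift 1 (from_block w'))"
    by (simp add: agree_def shift_def)
  then show ?thesis
    by (simp add: block_shift_def same agree_to_block)
qed

lemma agree_block_shift_zero:
  assumes "agree (Suc (prod_encode (n, n))) (\<lambda>_. False) w'"
  shows "agree n (\<lambda>_. False) (block_shift w')"
proof -
  have "\<not> block_shift w' i" if "i < n" for i
  proof
    assume "block_shift w' i"
    note bounds = block_shift_imp_bounds[OF this]
    then have "first_one w' \<le> prod_encode (n, n)"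
      using \<open>i < n\<close> prod_encode_mono[of "block_index w'" n "block_offset w'" n]
      by (simp add: prod_encode_block_index_offset)
    moreover have "w' (first_one w')"
      using bounds(3) first_one_holds by blast
    ultimately show False
      using assms by (auto simp: agree_def)
  qed
  then show ?thesis
    by (simp add: agree_def)
qed

lemma block_shift_continuous: "\<exists>m. \<forall>w'. agree m w w' \<longrightarrow> agree n (block_shift w) (block_shift w')"
proof (cases "\<exists>j. w j")
  case True
  then show ?thesis
    using agree_block_shift_nonzero by blast
next
  case False
  then have "w = (\<lambda>_. False)"
    by auto
  then show ?thesis
    using agree_block_shift_zero by auto
qed

section \<open>The block shift on the Cantor set\<close>

definition cantor_block_shift :: "real \<Rightarrow> real" where
  "cantor_block_shift x = cantor_point (block_shift (inv cantor_point x))"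

lemma cantor_block_shift_cantor_point [simp]:
  "cantor_block_shift (cantor_point w) = cantor_point (block_shift w)"
  by (simp add: cantor_block_shift_def inv_f_f[OF inj_cantor_point])

lemma funpow_cantor_block_shift:
  "(cantor_block_shift ^^ n) (cantor_point w) = cantor_point ((block_shift ^^ n) w)"
  by (induction n) simp_all

lemma cantor_block_shift_maps_to: "cantor_block_shift ` cantor_set \<subseteq> cantor_set"
  by (auto simp: cantor_block_shift_def cantor_point_in_cantor_set)

lemma continuous_on_cantor_block_shift: "continuous_on cantor_set cantor_block_shift"
  unfolding continuous_on_iff
proof (intro ballI allI impI)
  fix x e :: real assume "x \<in> cantor_set" "0 < e"
  then obtain w where x: "x = cantor_point w"
    using cantor_point_surj by metis
  obtain n where n: "(1 / 3) ^ n < e"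
    using real_arch_pow_inv[OF \<open>0 < e\<close>, of "1 / 3"] by auto
  obtain m where m: "\<And>w'. agree m w w' \<Longrightarrow> agree n (block_shift w) (block_shift w')"
    using block_shift_continuous by blast
  show "\<exists>d>0. \<forall>x'\<in>cantor_set. dist x' x < d \<longrightarrow> dist (cantor_block_shift x') (cantor_block_shift x) < e"
  proof (intro exI conjI ballI impI)
    show "0 < (1 / 3 ^ m :: real)"
      by simp
    fix x' assume "x' \<in> cantor_set" "dist x' x < 1 / 3 ^ m"
    moreover from this obtain w' where x': "x' = cantor_point w'"
      using cantor_point_surj by metis
    ultimately have "agree m w w'"
      using x by (intro agree_if_cantor_point_dist_less) (simp add: dist_real_def abs_minus_commute)
    then have "\<bar>cantor_point (block_shift w) - cantor_point (block_shift w')\<bar> \<le> 1 / 3 ^ n"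
      by (intro cantor_point_dist_agree m)
    then show "dist (cantor_block_shift x') (cantor_block_shift x) < e"
      using n x x' by (simp add: dist_real_def abs_minus_commute power_divide)
  qed
qed

lemma cantor_square_subset_closure:
  assumes approx: "\<And>a b L. \<exists>a' b'. agree L a a' \<and> agree L b b' \<and> (cantor_point a', cantor_point b') \<in> A"
  shows "cantor_set \<times> cantor_set \<subseteq> closure A"
proof clarify
  fix x y assume "x \<in> cantor_set" "y \<in> cantor_set"
  then obtain a b where x: "x = cantor_point a" and y: "y = cantor_point b"
    using cantor_point_surj by metis
  show "(x, y) \<in> closure A"
    unfolding closure_approachable
  proof (intro allI impI)
    fix e :: real assume "0 < e"
    then obtain L where L: "(1 / 3) ^ L < e / 2"
      using real_arch_pow_inv[of "e / 2" "1 / 3"] by auto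
    obtain a' b' where "agree L a a'" "agree L b b'" and A: "(cantor_point a', cantor_point b') \<in> A"
      using approx by blast
    then have "dist (cantor_point a') x \<le> 1 / 3 ^ L" "dist (cantor_point b') y \<le> 1 / 3 ^ L"
      using cantor_point_dist_agree[of L a a'] cantor_point_dist_agree[of L b b'] x y
      by (simp_all add: dist_real_def abs_minus_commute)
    moreover have "dist (cantor_point a', cantor_point b') (x, y) \<le> dist (cantor_point a') x + dist (cantor_point b') y"
      using sqrt_sum_squares_le_sum_abs[of "dist (cantor_point a') x" "dist (cantor_point b') y"]
      by (simp add: dist_Pair_Pair)
    ultimately have "dist (cantor_point a', cantor_point b') (x, y) < e"
      using L by (simp add: power_divide)
    then show "\<exists>q\<in>A. dist q (x, y) < e"
      using A by blast
  qed
qed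

lemma cantor_block_shift_eventually_equal_dense:
  "cantor_set \<times> cantor_set \<subseteq> closure {(a, b) \<in> cantor_set \<times> cantor_set.
     \<exists>n. (cantor_block_shift ^^ n) a = (cantor_block_shift ^^ n) b}" (is "_ \<subseteq> closure ?S")
proof (rule cantor_square_subset_closure)
  fix a b :: "nat \<Rightarrow> bool" and L
  define a' where "a' i = (i < L \<and> a i)" for i
  define b' where "b' i = (i < L \<and> b i)" for i
  have "(block_shift ^^ L) a' = (block_shift ^^ L) b'"
    using funpow_block_shift_eventually_zero[of L a' L] funpow_block_shift_eventually_zero[of L b' L]
    by (simp add: a'_def b'_def)
  then have "(cantor_block_shift ^^ L) (cantor_point a') = (cantor_block_shift ^^ L) (cantor_point b')"
    by (simp add: funpow_cantor_block_shift)
  then have "(cantor_point a', cantor_point b') \<in> ?S"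
    using cantor_point_in_cantor_set by blast
  moreover have "agree L a a'" "agree L b b'"
    by (simp_all add: agree_def a'_def b'_def)
  ultimately show "\<exists>a' b'. agree L a a' \<and> agree L b b' \<and> (cantor_point a', cantor_point b') \<in> ?S"
    by blast
qed

definition cantor_cylinder :: "nat \<Rightarrow> real set" where
  "cantor_cylinder N = cantor_set \<inter> {1 / 3 ^ Suc N <..< 2 / 3 ^ N}"

lemma cantor_point_in_cylinder_iff:
  "cantor_point w \<in> cantor_cylinder N \<longleftrightarrow> (\<exists>i. w i) \<and> first_one w = N"
  using cantor_point_in_interval_iff by (simp add: cantor_cylinder_def cantor_point_in_cantor_set)

lemma openin_cantor_cylinder: "openin (top_of_set cantor_set) (cantor_cylinder N)"
  unfolding cantor_cylinder_def by (rule openin_open_Int) simp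

lemma disjoint_family_cantor_cylinder: "disjoint_family cantor_cylinder"
proof -
  have "x \<notin> cantor_cylinder N \<inter> cantor_cylinder N'" if "N \<noteq> N'" for x N N'
  proof
    assume x: "x \<in> cantor_cylinder N \<inter> cantor_cylinder N'"
    then obtain w where "x = cantor_point w"
      using cantor_point_surj by (metis IntD1 cantor_cylinder_def)
    then show False
      using x that by (simp add: cantor_point_in_cylinder_iff)
  qed
  then show ?thesis
    by (auto simp: disjoint_family_on_def)
qed

lemma cantor_point_block_unit_in_cylinder:
  "cantor_point (to_block k (\<lambda>i. i = 0)) \<in> cantor_cylinder (prod_encode (k, 0))"
proof -
  have "first_one (\<lambda>i::nat. i = 0) = 0"
    by (rule first_one_eqI) auto
  then have "first_one (to_block k (\<lambda>i. i = 0)) = prod_encode (k, 0)"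
    "to_block k (\<lambda>i. i = 0) (prod_encode (k, 0))"
    using first_one_to_block[of "\<lambda>i. i = 0" 0 k] by (simp_all add: to_block_def)
  then show ?thesis
    using cantor_point_in_cylinder_iff by blast
qed

lemma cantor_block_shift_separated_dense:
  "cantor_set \<times> cantor_set \<subseteq> closure {(a, b) \<in> cantor_set \<times> cantor_set.
     \<exists>N. a \<in> cantor_cylinder N \<and> (\<exists>n\<ge>m. 1 / 3 ^ Suc (prod_encode (fst (prod_decode N), 0)) <
       dist ((cantor_block_shift ^^ n) a) ((cantor_block_shift ^^ n) b))}" (is "_ \<subseteq> closure ?S")
proof (rule cantor_square_subset_closure)
  fix a b :: "nat \<Rightarrow> bool" and L
  \<comment> \<open>\<open>a'\<close> keeps the first \<open>L\<close> digits of \<open>a\<close>, has a one at \<open>L\<close> and a lone one far out at \<open>M\<close>;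
    after \<open>n\<close> steps the lone one is the leading one of the block, while the truncation \<open>b'\<close> has died\<close>
  define M where "M = 2 * L + m + 1"
  define a' where "a' i = (i < L \<and> a i \<or> i = L \<or> i = M)" for i
  define b' where "b' i = (i < L \<and> b i)" for i
  define N where "N = first_one a'"
  define k where "k = block_index a'"
  define n where "n = M + block_offset a' - N"
  have "a' L"
    by (simp add: a'_def)
  then have "N \<le> L" "cantor_point a' \<in> cantor_cylinder N"
    using first_one_le[of a' L] cantor_point_in_cylinder_iff by (auto simp: N_def)
  have "block_offset a' \<le> N"
    using block_offset_le_first_one by (simp add: N_def)
  then have "block_offset a' \<le> n" "L \<le> n" "m \<le> n" "n + N - block_offset a' = M"
    using \<open>N \<le> L\<close> by (simp_all add: n_def M_def)
  have "shift M a' = (\<lambda>i. i = 0)"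
    by (auto simp: shift_def a'_def M_def)
  then have "(block_shift ^^ n) a' = to_block k (\<lambda>i. i = 0)"
    using shift_from_block[OF \<open>block_offset a' \<le> n\<close>] \<open>n + N - block_offset a' = M\<close>
    by (simp add: funpow_block_shift k_def N_def)
  then have "1 / 3 ^ Suc (prod_encode (k, 0)) < cantor_point ((block_shift ^^ n) a')"
    using cantor_point_block_unit_in_cylinder[of k] by (auto simp: cantor_cylinder_def)
  moreover have "(block_shift ^^ n) b' = (\<lambda>_. False)"
    using \<open>L \<le> n\<close> by (intro funpow_block_shift_eventually_zero[of L]) (simp add: b'_def)
  moreover have "fst (prod_decode N) = k"
    by (simp add: k_def N_def block_index_def)
  ultimately have "1 / 3 ^ Suc (prod_encode (fst (prod_decode N), 0)) <
      dist ((cantor_block_shift ^^ n) (cantor_point a')) ((cantor_block_shift ^^ n) (cantor_point b'))"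
    by (simp add: funpow_cantor_block_shift dist_real_def)
  then have "(cantor_point a', cantor_point b') \<in> ?S"
    using \<open>cantor_point a' \<in> cantor_cylinder N\<close> \<open>m \<le> n\<close> cantor_point_in_cantor_set by blast
  moreover have "agree L a a'" "agree L b b'"
    by (simp_all add: agree_def a'_def b'_def M_def)
  ultimately show "\<exists>a' b'. agree L a a' \<and> agree L b b' \<and> (cantor_point a', cantor_point b') \<in> ?S"
    by blast
qed

lemma generically_chaotic_cantor_block_shift: "generically_chaotic cantor_set cantor_block_shift"
proof -
  have "residual_in (cantor_set \<times> cantor_set)
     ({(x, y) \<in> cantor_set \<times> cantor_set. liminf (orbit_dist cantor_block_shift x y) = 0} \<inter>
      {(x, y) \<in> cantor_set \<times> cantor_set. 0 < limsup (orbit_dist cantor_block_shift x y)})"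
    by (intro residual_in_Int residual_in_liminf_orbit_dist_eq_0
        residual_in_limsup_orbit_dist_pos[where P = cantor_cylinder
          and \<theta> = "\<lambda>N. 1 / 3 ^ Suc (prod_encode (fst (prod_decode N), 0))"]
        continuous_on_cantor_block_shift cantor_block_shift_maps_to openin_cantor_cylinder
        disjoint_family_cantor_cylinder cantor_block_shift_eventually_equal_dense
        cantor_block_shift_separated_dense) simp
  then show ?thesis
    unfolding generically_chaotic_def li_yorke_pair_def by (rule residual_in_mono) auto
qed

lemma not_generically_eps_chaotic_cantor_block_shift:
  assumes "0 < \<epsilon>"
  shows "\<not> generically_eps_chaotic cantor_set cantor_block_shift \<epsilon>"
proof -
  obtain k where k: "(1 / 3) ^ k < \<epsilon>"
    using real_arch_pow_inv[OF assms, of "1 / 3"] by auto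
  define K where "K = prod_encode (k, 0)"
  have orbit_bound: "(cantor_block_shift ^^ n) a \<in> {0..1 / 3 ^ k}" if "a \<in> cantor_cylinder K" for a n
  proof -
    have "a \<in> cantor_set"
      using that by (simp add: cantor_cylinder_def)
    then obtain w where a: "a = cantor_point w"
      using cantor_point_surj by metis
    then have "block_index w = k"
      using that cantor_point_in_cylinder_iff by (simp add: block_index_def K_def)
    then have "agree k ((block_shift ^^ n) w) (\<lambda>_. False)"
      by (simp add: funpow_block_shift agree_to_block_zero)
    then show ?thesis
      using cantor_point_dist_agree cantor_point_bounds(1) a by (fastforce simp: funpow_cantor_block_shift)
  qed
  show ?thesis
  proof (rule not_generically_eps_chaotic_if_bounded_orbits)
    show "closed cantor_set"
      by (simp add: compact_cantor_set compact_imp_closed)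
    show "openin (top_of_set (cantor_set \<times> cantor_set)) (cantor_cylinder K \<times> cantor_cylinder K)"
      by (intro openin_Times openin_cantor_cylinder)
    show "cantor_cylinder K \<times> cantor_cylinder K \<noteq> {}"
      using cantor_point_block_unit_in_cylinder[of k] by (auto simp: K_def)
    show "dist ((cantor_block_shift ^^ n) a) ((cantor_block_shift ^^ n) b) \<le> \<epsilon>"
      if "(a, b) \<in> cantor_cylinder K \<times> cantor_cylinder K" for a b n
      using orbit_bound[of a n] orbit_bound[of b n] that k by (auto simp: dist_real_def power_divide)
  qed
qed

theorem proposition37:
  fixes X :: "'a::metric_space set"
  assumes "X homeomorphic cantor_set"
  shows "\<exists>f. continuous_on X f \<and> f ` X \<subseteq> X \<and> generically_chaotic X f \<and>
             (\<forall>\<epsilon>>0. \<not> generically_eps_chaotic X f \<epsilon>)"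
proof -
  obtain h k where hom: "homeomorphism X cantor_set h k"
    using assms unfolding homeomorphic_def by blast
  let ?f = "k \<circ> cantor_block_shift \<circ> h"
  note self_map = conjugate_continuous_self_map[OF hom continuous_on_cantor_block_shift cantor_block_shift_maps_to]
  have "generically_chaotic X ?f"
    using hom compact_cantor_set cantor_block_shift_maps_to generically_chaotic_cantor_block_shift
    by (rule generically_chaotic_conjugate)
  moreover have "\<not> generically_eps_chaotic X ?f \<epsilon>" if "0 < \<epsilon>" for \<epsilon>
    using generically_eps_chaotic_conjugate[OF hom compact_cantor_set cantor_block_shift_maps_to that]
      not_generically_eps_chaotic_cantor_block_shift by blast
  ultimately show ?thesis
    using self_map by blast
qed

end
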